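(* Let $N=\{1,\dots,n\}$, $n\ge 2$, be a parallel-link network with unit demand and latencies $\ell_i\in\mathcal{L}_c$. Let $c\in\mathbb{R}_+\cup\{\infty\}$ and $t\in\mathcal{T}(c)$. If $x_i(t)>0$ for all $i\in N$, then for all $i\in N$, $$t_i=\min\left\{\left(\ell'_i(x_i(t))+\frac{1}{\sum_{j\neq i}\frac{1}{\ell'_j(x_j(t))}}\right)\cdot x_i(t),\;c\right\},$$ where $\min\{s,\infty\}=s$.
   Context: $\mathcal{L}_c$: strictly increasing, convex, continuously differentiable functions $\mathbb{R}_+\to\mathbb{R}_+$. Parallel links $N$, one unit of flow; flows $x\in\mathbb{R}^N_+$ with $\sum_ix_i=1$. For tolls $t\in\mathbb{R}^N_+$, $x(t)$ is the unique Wardrop equilibrium for $t$: for all $i,j$ with $x_i>0$, $\ell_i(x_i)+t_i\le \ell_j(x_j)+t_j$. Profit $\Pi_i(t)=t_ix_i(t)$. For $c\in\mathbb{R}_+$, $\mathcal{T}(c)$ is the set of toll vectors $t$ with $0\le t_i\le c$ for all $i$ such that for every $i$ and every $t'_i\in[0,c]$, $\Pi_i(t_i,t_{-i})\ge\Pi_i(t'_i,t_{-i})$ (flow recomputed); $\mathcal{T}(\infty)$ is defined the same way with no upper bound on tolls (uncapped subgame perfect Nash equilibria). *)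

theory Defs
  imports "HOL-Analysis.Analysis"
begin

text \<open>Links are indexed by 0..n-1. Latencies l :: nat => real => real,
  flows and tolls are functions nat => real (only indices < n matter).\<close>

definition in_Lc :: "(real \<Rightarrow> real) \<Rightarrow> bool" where
  "in_Lc f \<longleftrightarrow>
     strict_mono_on {0..} f \<and> convex_on {0..} f \<and> (\<forall>x\<ge>0. f x \<ge> 0) \<and>
     (\<exists>f'. continuous_on {0..} f' \<and>
        (\<forall>x\<ge>0. (f has_real_derivative f' x) (at x within {0..})))"

definition feasible_flow :: "nat \<Rightarrow> (nat \<Rightarrow> real) \<Rightarrow> bool" where
  "feasible_flow n x \<longleftrightarrow> (\<forall>i<n. 0 \<le> x i) \<and> (\<Sum>i<n. x i) = 1"

definition wardrop :: "nat \<Rightarrow> (nat \<Rightarrow> real \<Rightarrow> real) \<Rightarrow> (nat \<Rightarrow> real) \<Rightarrow> (nat \<Rightarrow> real) \<Rightarrow> bool" where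
  "wardrop n l t x \<longleftrightarrow> feasible_flow n x \<and>
     (\<forall>i<n. \<forall>j<n. x i > 0 \<longrightarrow> l i (x i) + t i \<le> l j (x j) + t j)"

definition eq_flow :: "nat \<Rightarrow> (nat \<Rightarrow> real \<Rightarrow> real) \<Rightarrow> (nat \<Rightarrow> real) \<Rightarrow> (nat \<Rightarrow> real)" where
  "eq_flow n l t = (THE x. wardrop n l t x \<and> (\<forall>i\<ge>n. x i = 0))"

definition profit :: "nat \<Rightarrow> (nat \<Rightarrow> real \<Rightarrow> real) \<Rightarrow> nat \<Rightarrow> (nat \<Rightarrow> real) \<Rightarrow> real" where
  "profit n l i t = t i * eq_flow n l t i"

text \<open>T(c) for c :: ereal; c = \<infinity> gives the uncapped equilibria.\<close>
definition toll_eq :: "nat \<Rightarrow> (nat \<Rightarrow> real \<Rightarrow> real) \<Rightarrow> ereal \<Rightarrow> (nat \<Rightarrow> real) set" where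
  "toll_eq n l c = {t. (\<forall>i<n. 0 \<le> t i \<and> ereal (t i) \<le> c) \<and>
     (\<forall>i<n. \<forall>t'. 0 \<le> t' \<and> ereal t' \<le> c \<longrightarrow>
        profit n l i t \<ge> profit n l i (t(i := t'))) }"

end

theory Submission imports Defs begin

(* Fix link i and an equilibrium in which every link is used, so that all links have the same
   cost L.  Deviations of link i are parametrised by the common cost level y near L: every other
   link j carries the flow z_j(y) at which l_j + t_j = y, link i carries 1 - \<Sum>z_j(y), and its toll
   s(y) is the one that brings its cost to y as well.  With S = \<Sum>_{j\<noteq>i} 1/l_j', one gets
   z_j' = 1/l_j', s'(L) = 1 + l_i' S > 0, and the profit s(y) (1 - \<Sum>z_j(y)) has derivative
   S (D - t_i) at L, where D is the claimed formula.  Optimality of t_i among the tolls in [0,c]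
   forces this derivative to be \<le> 0 if t_i < c and \<ge> 0 if t_i > 0, whence t_i = min D c. *)

lemma in_Lc_has_derivative_interior:
  assumes "in_Lc f" and "0 < x"
  obtains f' where "DERIV f x :> f' x" and "f 0 - f x \<ge> f' x * (0 - x)"
proof -
  from assms(1) obtain f' where cv: "convex_on {0..} f"
    and d: "\<forall>x\<ge>0. (f has_real_derivative f' x) (at x within {0..})"
    unfolding in_Lc_def by blast
  have int: "x \<in> interior {0::real..}" using assms(2) by simp
  have "(f has_real_derivative f' x) (at x within {0..})"
    using d assms(2) by simp
  then have "DERIV f x :> f' x"
    using at_within_interior[OF int] by simp
  moreover have "f 0 - f x \<ge> f' x * (0 - x)"
    by (rule convex_on_imp_above_tangent[OF cv]) (use d assms(2) int in auto)
  ultimately show thesis by (rule that)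
qed

lemma in_Lc_continuous_on: "in_Lc f \<Longrightarrow> continuous_on {0..} f"
  unfolding in_Lc_def by (blast intro: DERIV_continuous_on)

lemma in_Lc_strict_mono_on: "in_Lc f \<Longrightarrow> strict_mono_on {0..} f"
  unfolding in_Lc_def by blast

lemma in_Lc_DERIV: "in_Lc f \<Longrightarrow> 0 < x \<Longrightarrow> DERIV f x :> deriv f x"
  by (metis in_Lc_has_derivative_interior DERIV_imp_deriv)

lemma in_Lc_deriv_pos:
  assumes "in_Lc f" and "0 < x"
  shows "0 < deriv f x"
proof -
  obtain f' where d: "DERIV f x :> f' x" and tangent: "f 0 - f x \<ge> f' x * (0 - x)"
    using in_Lc_has_derivative_interior[OF assms] .
  have "f 0 < f x" using in_Lc_strict_mono_on[OF assms(1)] assms(2)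
    by (auto simp: strict_mono_on_def)
  moreover have "f' x * (0 - x) = - (f' x * x)" by simp
  ultimately have "0 < f' x * x" using tangent by linarith
  with assms(2) have "0 < f' x" by (simp add: zero_less_mult_iff)
  then show ?thesis using d DERIV_imp_deriv by metis
qed

definition clamp_inv :: "(real \<Rightarrow> real) \<Rightarrow> real \<Rightarrow> real" where
  "clamp_inv f y = the_inv_into {0..1} f (max (f 0) (min (f 1) y))"

context
  fixes f :: "real \<Rightarrow> real"
  assumes cont: "continuous_on {0..1} f" and mono: "strict_mono_on {0..1} f"
begin

private lemma inj: "inj_on f {0..1}"
  using mono strict_mono_on_imp_inj_on by blast

private lemma f_0_le_1: "f 0 \<le> f 1"
  using mono by (simp add: strict_mono_on_def less_imp_le)

private lemma clamp_in_image: "max (f 0) (min (f 1) y) \<in> f ` {0..1}"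
proof -
  obtain x where "0 \<le> x" "x \<le> 1" "f x = max (f 0) (min (f 1) y)"
    using IVT'[of f 0 "max (f 0) (min (f 1) y)" 1] cont f_0_le_1 by auto
  then show ?thesis by force
qed

lemma clamp_inv_mem: "clamp_inv f y \<in> {0..1}"
  unfolding clamp_inv_def using the_inv_into_into[OF inj clamp_in_image order_refl] .

lemma f_clamp_inv: "f (clamp_inv f y) = max (f 0) (min (f 1) y)"
  unfolding clamp_inv_def using f_the_inv_into_f[OF inj clamp_in_image] .

lemma clamp_inv_f:
  assumes "z \<in> {0..1}"
  shows "clamp_inv f (f z) = z"
proof -
  have "f 0 \<le> f z" "f z \<le> f 1"
    using mono assms by (auto simp: strict_mono_on_def le_less)
  then have "max (f 0) (min (f 1) (f z)) = f z" by simp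
  then show ?thesis
    unfolding clamp_inv_def using the_inv_into_f_f[OF inj assms] by simp
qed

lemma clamp_inv_below: "y \<le> f 0 \<Longrightarrow> clamp_inv f y = 0"
  using clamp_inv_f[of 0] f_0_le_1 by (simp add: clamp_inv_def)

lemma clamp_inv_above: "f 1 \<le> y \<Longrightarrow> clamp_inv f y = 1"
  using clamp_inv_f[of 1] f_0_le_1 by (simp add: clamp_inv_def)

lemma continuous_clamp_inv: "continuous_on UNIV (clamp_inv f)"
proof -
  have "continuous_on (f ` {0..1}) (the_inv_into {0..1} f)"
    by (rule continuous_on_inv[OF cont]) (auto simp: the_inv_into_f_f[OF inj])
  moreover have "continuous_on UNIV (\<lambda>y. max (f 0) (min (f 1) y))"
    by (intro continuous_intros)
  ultimately show ?thesis
    unfolding clamp_inv_def using clamp_in_image by (auto intro: continuous_on_compose2)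
qed

lemma clamp_inv_pos_imp_le: "0 < clamp_inv f y \<Longrightarrow> f (clamp_inv f y) \<le> y"
  using clamp_inv_below[of y] f_clamp_inv[of y] f_0_le_1 by (cases "y \<le> f 0") auto

lemma clamp_inv_less_one_imp_ge: "clamp_inv f y < 1 \<Longrightarrow> y \<le> f (clamp_inv f y)"
  using clamp_inv_above[of y] f_clamp_inv[of y] f_0_le_1 by (cases "f 1 \<le> y") auto

end

lemma clamp_inv_DERIV:
  assumes "continuous_on {0..1} f" "strict_mono_on {0..1} f"
    and "0 < x" "x < 1" and "DERIV f x :> D" "D \<noteq> 0"
  shows "DERIV (clamp_inv f) (f x) :> inverse D"
proof (rule DERIV_inverse_function[where a = "f 0" and b = "f 1"])
  show "f 0 < f x" "f x < f 1" using assms(2-4) by (auto simp: strict_mono_on_def)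
  show "DERIV f (clamp_inv f (f x)) :> D" using assms clamp_inv_f by simp
  show "f (clamp_inv f y) = y" if "f 0 < y" "y < f 1" for y
    using f_clamp_inv[OF assms(1,2)] that by simp
  show "isCont (clamp_inv f) (f x)"
    using continuous_clamp_inv[OF assms(1,2)] continuous_on_eq_continuous_at by blast
qed (fact assms)

definition level_flow :: "(nat \<Rightarrow> real \<Rightarrow> real) \<Rightarrow> (nat \<Rightarrow> real) \<Rightarrow> nat \<Rightarrow> real \<Rightarrow> real" where
  "level_flow l t j y = clamp_inv (\<lambda>z. l j z + t j) y"

lemma in_Lc_cost_on_unit_interval:
  assumes "in_Lc f"
  shows "continuous_on {0..1} (\<lambda>z. f z + c)" "strict_mono_on {0..1} (\<lambda>z. f z + c)"
  using in_Lc_continuous_on[OF assms] in_Lc_strict_mono_on[OF assms]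
  by (auto intro!: continuous_intros elim: continuous_on_subset simp: strict_mono_on_def)

lemma level_flow_mem: "in_Lc (l j) \<Longrightarrow> level_flow l t j y \<in> {0..1}"
  unfolding level_flow_def by (rule clamp_inv_mem[OF in_Lc_cost_on_unit_interval])

lemma cost_level_flow:
  "in_Lc (l j) \<Longrightarrow>
    l j (level_flow l t j y) + t j = max (l j 0 + t j) (min (l j 1 + t j) y)"
  unfolding level_flow_def by (rule f_clamp_inv[OF in_Lc_cost_on_unit_interval])

lemma continuous_level_flow: "in_Lc (l j) \<Longrightarrow> continuous_on UNIV (level_flow l t j)"
  unfolding level_flow_def by (rule continuous_clamp_inv[OF in_Lc_cost_on_unit_interval])

lemma sum_two_le:
  fixes x :: "nat \<Rightarrow> real"
  assumes "\<forall>k<n. 0 \<le> x k" "i < n" "j < n" "i \<noteq> j"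
  shows "x i + x j \<le> (\<Sum>k<n. x k)"
proof -
  have "(\<Sum>k\<in>{i,j}. x k) \<le> (\<Sum>k<n. x k)"
    by (rule sum_mono2) (use assms in auto)
  then show ?thesis using assms by simp
qed

lemma wardrop_le:
  assumes mono: "\<forall>i<n. strict_mono_on {0..} (l i)"
    and x: "wardrop n l t x" and y: "wardrop n l t y" and "k < n"
  shows "y k \<le> x k"
proof (rule ccontr)
  assume "\<not> y k \<le> x k"
  then have yk: "x k < y k" by simp
  have x0: "\<forall>i<n. 0 \<le> x i" and y0: "\<forall>i<n. 0 \<le> y i"
    and sums: "(\<Sum>i<n. x i) = (\<Sum>i<n. y i)"
    using x y by (auto simp: wardrop_def feasible_flow_def)
  have "\<exists>m<n. y m < x m"
  proof (rule ccontr)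
    assume "\<not> (\<exists>m<n. y m < x m)"
    then have "(\<Sum>i<n. x i) < (\<Sum>i<n. y i)"
      using sum_strict_mono_ex1[of "{..<n}" x y] yk \<open>k < n\<close> by fastforce
    with sums show False by simp
  qed
  then obtain m where m: "m < n" "y m < x m" by blast
  \<comment> \<open>Link \<open>k\<close> gains and link \<open>m\<close> loses flow, contradicting both Wardrop conditions.\<close>
  have "l k (y k) + t k \<le> l m (y m) + t m"
    using y \<open>k < n\<close> m(1) yk x0 unfolding wardrop_def by (meson le_less_trans)
  also have "\<dots> < l m (x m) + t m"
    using mono m x0 y0 by (auto simp: strict_mono_on_def)
  also have "\<dots> \<le> l k (x k) + t k"
    using x \<open>k < n\<close> m y0 unfolding wardrop_def by (meson le_less_trans)
  also have "\<dots> < l k (y k) + t k"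
    using mono \<open>k < n\<close> yk x0 by (auto simp: strict_mono_on_def)
  finally have "l k (y k) + t k < l k (y k) + t k" .
  then show False by simp
qed

lemma eq_flow_eqI:
  assumes "\<forall>i<n. strict_mono_on {0..} (l i)"
    and "wardrop n l t x" and "\<forall>i\<ge>n. x i = 0"
  shows "eq_flow n l t = x"
  unfolding eq_flow_def
proof (rule the_equality)
  fix y assume y: "wardrop n l t y \<and> (\<forall>i\<ge>n. y i = 0)"
  show "y = x"
  proof
    fix k show "y k = x k"
      using wardrop_le[OF assms(1,2), of y k] wardrop_le[OF assms(1), of t y x k] assms(2,3) y
      by (cases "k < n") (auto intro: order_antisym)
  qed
qed (use assms in simp)

lemma level_flow_sum_eq_one:
  assumes "1 \<le> n" and L: "\<forall>j<n. in_Lc (l j)"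
  obtains y where "(\<Sum>j<n. level_flow l t j y) = 1"
proof -
  define S where "S y = (\<Sum>j<n. level_flow l t j y)" for y
  define lo where "lo = Min ((\<lambda>j. l j 0 + t j) ` {..<n})"
  define hi where "hi = Max ((\<lambda>j. l j 1 + t j) ` {..<n})"
  have cost: "continuous_on {0..1} (\<lambda>z. l j z + t j)" "strict_mono_on {0..1} (\<lambda>z. l j z + t j)"
    if "j < n" for j
    using in_Lc_cost_on_unit_interval L that by auto
  have "S lo = 0"
    unfolding S_def level_flow_def lo_def using cost by (simp add: clamp_inv_below)
  moreover have "S hi = n"
    unfolding S_def level_flow_def hi_def using cost by (simp add: clamp_inv_above)
  moreover have "lo \<le> hi"
  proof -
    have "lo \<le> l 0 0 + t 0" "l 0 1 + t 0 \<le> hi"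
      using \<open>1 \<le> n\<close> unfolding lo_def hi_def by auto
    moreover have "l 0 0 + t 0 \<le> l 0 1 + t 0"
      using cost(2)[of 0] \<open>1 \<le> n\<close> by (simp add: strict_mono_on_def less_imp_le)
    ultimately show ?thesis by linarith
  qed
  moreover have "continuous_on {lo..hi} S"
    unfolding S_def using continuous_level_flow L
    by (intro continuous_on_sum) (blast intro: continuous_on_subset)
  ultimately obtain y where "S y = 1"
    using IVT'[of S lo 1 hi] \<open>1 \<le> n\<close> by auto
  then show thesis unfolding S_def by (rule that)
qed

lemma wardrop_level_flow:
  assumes L: "\<forall>j<n. in_Lc (l j)" and sum: "(\<Sum>j<n. level_flow l t j y) = 1"
  shows "wardrop n l t (\<lambda>k. if k < n then level_flow l t k y else 0)" (is "wardrop n l t ?x")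
proof -
  have cost: "continuous_on {0..1} (\<lambda>z. l j z + t j)" "strict_mono_on {0..1} (\<lambda>z. l j z + t j)"
    if "j < n" for j
    using in_Lc_cost_on_unit_interval L that by auto
  have nonneg: "\<forall>k<n. 0 \<le> ?x k" using level_flow_mem L by simp
  have "l i (?x i) + t i \<le> l j (?x j) + t j" if ij: "i < n" "j < n" "0 < ?x i" for i j
  proof -
    have "l i (?x i) + t i \<le> y"
      using clamp_inv_pos_imp_le[OF cost[OF ij(1)]] ij unfolding level_flow_def by simp
    moreover have "y \<le> l j (?x j) + t j" if "?x j < 1"
      using clamp_inv_less_one_imp_ge[OF cost[OF ij(2)]] ij that unfolding level_flow_def by simp
    moreover have "?x j < 1" if "i \<noteq> j"
      using sum_two_le[OF nonneg ij(1,2) that] sum ij by simp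
    ultimately show ?thesis by (cases "i = j") auto
  qed
  then show ?thesis using nonneg sum by (simp add: wardrop_def feasible_flow_def)
qed

lemma wardrop_eq_flow:
  assumes "1 \<le> n" and L: "\<forall>j<n. in_Lc (l j)"
  shows "wardrop n l t (eq_flow n l t)"
proof -
  obtain y where "(\<Sum>j<n. level_flow l t j y) = 1"
    using level_flow_sum_eq_one[OF assms] .
  then have w: "wardrop n l t (\<lambda>k. if k < n then level_flow l t k y else 0)"
    by (rule wardrop_level_flow[OF L])
  have "eq_flow n l t = (\<lambda>k. if k < n then level_flow l t k y else 0)"
    by (rule eq_flow_eqI[OF _ w]) (use L in_Lc_strict_mono_on in auto)
  with w show ?thesis by simp
qed

lemma eventually_at_left_less: "\<forall>\<^sub>F y in at_left (x::real). y < x"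
  unfolding eventually_at_left_field by (intro exI[of _ "x - 1"]) auto

lemma first_order_conditions:
  fixes g s :: "real \<Rightarrow> real" and c :: ereal
  assumes g: "DERIV g y0 :> G" and s: "DERIV s y0 :> s'" and "0 < s'"
    and "0 \<le> s y0" and "ereal (s y0) \<le> c"
    and max: "\<forall>\<^sub>F y in at y0. 0 \<le> s y \<longrightarrow> ereal (s y) \<le> c \<longrightarrow> g y \<le> g y0"
  shows "ereal (s y0) < c \<Longrightarrow> G \<le> 0" and "0 < s y0 \<Longrightarrow> 0 \<le> G"
proof -
  \<comment> \<open>Since \<open>s' > 0\<close>, moving \<open>y\<close> to the right (left) of \<open>y0\<close> raises (lowers) \<open>s\<close>.\<close>
  have s_quot: "\<forall>\<^sub>F y in at y0. 0 < (s y - s y0) / (y - y0)"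
    using order_tendstoD(1)[OF s[unfolded has_field_derivative_iff]] \<open>0 < s'\<close> .
  have s_lim: "(s \<longlongrightarrow> s y0) (at y0)"
    using DERIV_isCont[OF s] isCont_def by blast
  show "G \<le> 0" if "ereal (s y0) < c"
  proof (rule ccontr)
    assume "\<not> G \<le> 0"
    then have "\<forall>\<^sub>F y in at y0. 0 < (g y - g y0) / (y - y0)"
      using order_tendstoD(1)[OF g[unfolded has_field_derivative_iff]] by simp
    moreover have "\<forall>\<^sub>F y in at y0. ereal (s y) < c"
      using order_tendstoD(2)[OF tendsto_ereal[OF s_lim] that] .
    ultimately have "\<forall>\<^sub>F y in at_right y0. y0 < y \<and> 0 < (g y - g y0) / (y - y0) \<and>
        0 < (s y - s y0) / (y - y0) \<and> ereal (s y) < c \<and> (0 \<le> s y \<longrightarrow> ereal (s y) \<le> c \<longrightarrow> g y \<le> g y0)"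
      using s_quot max eventually_at_right_less unfolding eventually_at_split
      by (auto simp: eventually_conj_iff)
    then obtain y where "y0 < y" "0 < (g y - g y0) / (y - y0)" "0 < (s y - s y0) / (y - y0)"
      "ereal (s y) < c" "0 \<le> s y \<longrightarrow> ereal (s y) \<le> c \<longrightarrow> g y \<le> g y0"
      using eventually_happens'[of "at_right y0"] by force
    then show False using \<open>0 \<le> s y0\<close> by (auto simp: zero_less_divide_iff)
  qed
  show "0 \<le> G" if "0 < s y0"
  proof (rule ccontr)
    assume "\<not> 0 \<le> G"
    then have "\<forall>\<^sub>F y in at y0. (g y - g y0) / (y - y0) < 0"
      using order_tendstoD(2)[OF g[unfolded has_field_derivative_iff]] by simp
    moreover have "\<forall>\<^sub>F y in at y0. 0 < s y"
      using order_tendstoD(1)[OF s_lim that] .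
    ultimately have "\<forall>\<^sub>F y in at_left y0. y < y0 \<and> (g y - g y0) / (y - y0) < 0 \<and>
        0 < (s y - s y0) / (y - y0) \<and> 0 < s y \<and> (0 \<le> s y \<longrightarrow> ereal (s y) \<le> c \<longrightarrow> g y \<le> g y0)"
      using s_quot max eventually_at_left_less unfolding eventually_at_split
      by (auto simp: eventually_conj_iff)
    then obtain y where "y < y0" "(g y - g y0) / (y - y0) < 0" "0 < (s y - s y0) / (y - y0)"
      "0 < s y" "0 \<le> s y \<longrightarrow> ereal (s y) \<le> c \<longrightarrow> g y \<le> g y0"
      using eventually_happens'[of "at_left y0"] by force
    then have "s y < s y0" and "g y0 < g y" by (auto simp: zero_less_divide_iff divide_less_0_iff)
    with \<open>ereal (s y0) \<le> c\<close> have "ereal (s y) \<le> c"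
      using order_trans[of "ereal (s y)" "ereal (s y0)" c] by simp
    then show False using \<open>0 < s y\<close> \<open>g y0 < g y\<close> \<open>0 \<le> s y \<longrightarrow> _\<close> by simp
  qed
qed

lemma ereal_eq_min_if_first_order:
  fixes t D :: real and c :: ereal
  assumes "0 < D" "0 \<le> t" "ereal t \<le> c"
    and interior: "ereal t < c \<Longrightarrow> D \<le> t" and positive: "0 < t \<Longrightarrow> t \<le> D"
  shows "ereal t = min (ereal D) c"
proof (cases "ereal t < c")
  case True
  with interior positive \<open>0 < D\<close> have "t = D" by fastforce
  with True show ?thesis by (simp add: min_absorb1 less_imp_le)
next
  case False
  with \<open>ereal t \<le> c\<close> have "c = ereal t" by simp
  with assms show ?thesis by (cases "t = 0") (auto simp: min_def)
qed

definition residual_flow :: "nat \<Rightarrow> (nat \<Rightarrow> real \<Rightarrow> real) \<Rightarrow> (nat \<Rightarrow> real) \<Rightarrow> nat \<Rightarrow> real \<Rightarrow> real" where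
  "residual_flow n l t i y = 1 - (\<Sum>j\<in>{..<n} - {i}. level_flow l t j y)"

definition deviation_toll :: "nat \<Rightarrow> (nat \<Rightarrow> real \<Rightarrow> real) \<Rightarrow> (nat \<Rightarrow> real) \<Rightarrow> nat \<Rightarrow> real \<Rightarrow> real" where
  "deviation_toll n l t i y = y - l i (residual_flow n l t i y)"

lemma eq_flow_deviation:
  assumes L: "\<forall>j<n. in_Lc (l j)" and "i < n"
    and inside: "\<forall>j\<in>{..<n} - {i}. l j 0 + t j \<le> y \<and> y \<le> l j 1 + t j"
    and "0 \<le> residual_flow n l t i y"
  shows "eq_flow n l (t(i := deviation_toll n l t i y)) i = residual_flow n l t i y"
proof -
  define x where "x k = (if k < n then if k = i then residual_flow n l t i y
    else level_flow l t k y else 0)" for k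
  have cost: "l k (x k) + (t(i := deviation_toll n l t i y)) k = y" if "k < n" for k
    using that inside cost_level_flow[of l k t y] L
    by (cases "k = i") (auto simp: x_def deviation_toll_def)
  have "(\<Sum>k<n. x k) = x i + (\<Sum>k\<in>{..<n} - {i}. x k)"
    using sum.remove[of "{..<n}" i x] \<open>i < n\<close> by simp
  also have "\<dots> = 1"
    by (simp add: x_def \<open>i < n\<close> residual_flow_def)
  finally have "feasible_flow n x"
    using level_flow_mem L \<open>0 \<le> residual_flow n l t i y\<close>
    by (auto simp: feasible_flow_def x_def)
  with cost have "wardrop n l (t(i := deviation_toll n l t i y)) x"
    by (simp add: wardrop_def)
  then have "eq_flow n l (t(i := deviation_toll n l t i y)) = x"
    by (rule eq_flow_eqI[rotated]) (use L in_Lc_strict_mono_on in \<open>auto simp: x_def\<close>)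
  with \<open>i < n\<close> show ?thesis by (simp add: x_def)
qed

locale interior_equilibrium =
  fixes n :: nat and l :: "nat \<Rightarrow> real \<Rightarrow> real" and t x :: "nat \<Rightarrow> real"
  assumes two_links: "2 \<le> n"
    and latencies: "\<forall>j<n. in_Lc (l j)"
    and wardrop: "wardrop n l t x"
    and positive: "\<forall>j<n. 0 < x j"
begin

definition level :: real where
  "level = l 0 (x 0) + t 0"

lemma cost_eq_level:
  assumes "j < n"
  shows "l j (x j) + t j = level"
proof -
  have "0 < n" using two_links by simp
  with wardrop positive assms show ?thesis
    unfolding wardrop_def level_def by (meson order_antisym)
qed

lemma other_link:
  obtains k where "k < n" "k \<noteq> j"
proof
  show "(if j = 0 then 1 else 0) < n" "(if j = 0 then 1 else 0) \<noteq> j"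
    using two_links by auto
qed

lemma flow_less_one:
  assumes "j < n"
  shows "x j < 1"
proof -
  obtain k where "k < n" "k \<noteq> j" by (rule other_link)
  then have "x j + x k \<le> 1"
    using sum_two_le[of n x j k] wardrop positive assms
    by (auto simp: wardrop_def feasible_flow_def less_imp_le)
  with positive \<open>k < n\<close> show ?thesis by fastforce
qed

lemma level_inside:
  assumes "j < n"
  shows "l j 0 + t j < level" "level < l j 1 + t j"
proof -
  have "strict_mono_on {0..} (l j)" "0 < x j" "x j < 1"
    using in_Lc_strict_mono_on latencies positive flow_less_one assms by auto
  then have "l j 0 < l j (x j)" "l j (x j) < l j 1"
    by (auto simp: strict_mono_on_def)
  with cost_eq_level[OF assms] show "l j 0 + t j < level" "level < l j 1 + t j" by auto
qed

lemma level_flow_at_level: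
  assumes "j < n"
  shows "level_flow l t j level = x j"
proof -
  have "in_Lc (l j)" "x j \<in> {0..1}"
    using latencies positive flow_less_one assms by (auto simp: less_imp_le)
  from clamp_inv_f[OF in_Lc_cost_on_unit_interval[OF this(1), of "t j"] this(2)]
  show ?thesis using cost_eq_level[OF assms] by (simp add: level_flow_def)
qed

lemma DERIV_level_flow:
  assumes "j < n"
  shows "DERIV (level_flow l t j) level :> 1 / deriv (l j) (x j)"
proof -
  have lj: "in_Lc (l j)" and xj: "0 < x j" "x j < 1"
    using latencies positive flow_less_one assms by auto
  have "DERIV (\<lambda>z. l j z + t j) (x j) :> deriv (l j) (x j)"
    using in_Lc_DERIV[OF lj xj(1)] by (auto intro: derivative_eq_intros)
  from clamp_inv_DERIV[OF in_Lc_cost_on_unit_interval[OF lj, of "t j"] xj this]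
    in_Lc_deriv_pos[OF lj xj(1)] cost_eq_level[OF assms]
  show ?thesis by (simp add: level_flow_def[abs_def] inverse_eq_divide)
qed

lemma residual_flow_at_level:
  assumes "i < n"
  shows "residual_flow n l t i level = x i"
proof -
  have "(\<Sum>j\<in>{..<n} - {i}. level_flow l t j level) = (\<Sum>j\<in>{..<n} - {i}. x j)"
    using level_flow_at_level by (intro sum.cong) auto
  also have "\<dots> = 1 - x i"
    using wardrop sum.remove[of "{..<n}" i x] assms by (simp add: wardrop_def feasible_flow_def)
  finally show ?thesis by (simp add: residual_flow_def)
qed

lemma DERIV_residual_flow:
  assumes "i < n"
  shows "DERIV (residual_flow n l t i) level :> - (\<Sum>j\<in>{..<n} - {i}. 1 / deriv (l j) (x j))"
proof -
  have "DERIV (\<lambda>y. \<Sum>j\<in>{..<n} - {i}. level_flow l t j y) level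
      :> (\<Sum>j\<in>{..<n} - {i}. 1 / deriv (l j) (x j))"
    by (rule DERIV_sum) (use DERIV_level_flow in auto)
  from DERIV_diff[OF DERIV_const this] show ?thesis
    by (simp add: residual_flow_def[abs_def])
qed

lemma deviation_toll_at_level: "i < n \<Longrightarrow> deviation_toll n l t i level = t i"
  using residual_flow_at_level cost_eq_level[symmetric] by (simp add: deviation_toll_def)

lemma DERIV_deviation_toll:
  assumes "i < n"
  shows "DERIV (deviation_toll n l t i) level
    :> 1 + deriv (l i) (x i) * (\<Sum>j\<in>{..<n} - {i}. 1 / deriv (l j) (x j))"
proof -
  have "DERIV (l i) (residual_flow n l t i level) :> deriv (l i) (x i)"
    using in_Lc_DERIV latencies positive assms residual_flow_at_level by simp
  from DERIV_diff[OF DERIV_ident DERIV_chain2[OF this DERIV_residual_flow[OF assms]]]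
  show ?thesis by (simp add: deviation_toll_def[abs_def])
qed

lemma sum_inverse_deriv_pos:
  assumes "i < n"
  shows "0 < (\<Sum>j\<in>{..<n} - {i}. 1 / deriv (l j) (x j))"
proof -
  obtain k where "k < n" "k \<noteq> i" by (rule other_link)
  then have "{..<n} - {i} \<noteq> {}" by blast
  then show ?thesis
    using in_Lc_deriv_pos latencies positive by (intro sum_pos) auto
qed

lemma eventually_eq_flow_deviation:
  assumes "i < n"
  shows "\<forall>\<^sub>F y in at level.
    eq_flow n l (t(i := deviation_toll n l t i y)) i = residual_flow n l t i y"
proof -
  have "\<forall>\<^sub>F y in at level. \<forall>j\<in>{..<n} - {i}. l j 0 + t j < y \<and> y < l j 1 + t j"
    using level_inside
    by (intro eventually_ball_finite ballI eventually_conj order_tendstoD[OF tendsto_ident_at]) auto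
  moreover have "\<forall>\<^sub>F y in at level. 0 < residual_flow n l t i y"
    using order_tendstoD(1)[OF DERIV_isCont[OF DERIV_residual_flow[OF assms], unfolded isCont_def]]
      residual_flow_at_level positive assms by simp
  ultimately show ?thesis
  proof eventually_elim
    case (elim y)
    then show ?case using eq_flow_deviation[OF latencies assms] by (simp add: less_imp_le)
  qed
qed

lemma toll_eq_first_order:
  assumes i: "i < n" and "t \<in> toll_eq n l c" and "eq_flow n l t i = x i"
  defines "S \<equiv> \<Sum>j\<in>{..<n} - {i}. 1 / deriv (l j) (x j)"
  defines "D \<equiv> (deriv (l i) (x i) + 1 / S) * x i"
  shows "ereal (t i) < c \<Longrightarrow> D \<le> t i" and "0 < t i \<Longrightarrow> t i \<le> D"
proof -
  let ?d = "deviation_toll n l t i" and ?r = "residual_flow n l t i"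
  have "0 < S" unfolding S_def by (rule sum_inverse_deriv_pos[OF i])
  have "0 \<le> t i" "ereal (t i) \<le> c"
    and optimal: "\<And>t'. 0 \<le> t' \<Longrightarrow> ereal t' \<le> c \<Longrightarrow> profit n l i (t(i := t')) \<le> profit n l i t"
    using assms(2) i unfolding toll_eq_def by auto
  have "(1 + deriv (l i) (x i) * S) * x i + - S * t i = S * (D - t i)"
    using \<open>0 < S\<close> by (simp add: D_def field_simps)
  with DERIV_mult[OF DERIV_deviation_toll[OF i, folded S_def] DERIV_residual_flow[OF i, folded S_def]]
  have deriv_profit: "DERIV (\<lambda>y. ?d y * ?r y) level :> S * (D - t i)"
    by (simp only: deviation_toll_at_level[OF i] residual_flow_at_level[OF i])
  have max_profit: "\<forall>\<^sub>F y in at level.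
      0 \<le> ?d y \<longrightarrow> ereal (?d y) \<le> c \<longrightarrow> ?d y * ?r y \<le> ?d level * ?r level"
    using eventually_eq_flow_deviation[OF i]
  proof eventually_elim
    case (elim y)
    then show ?case using optimal[of "?d y"] assms(3)
      by (simp add: profit_def deviation_toll_at_level[OF i] residual_flow_at_level[OF i])
  qed
  have "0 < 1 + deriv (l i) (x i) * S"
    using in_Lc_deriv_pos latencies positive i \<open>0 < S\<close> by (simp add: add_pos_pos)
  moreover have "0 \<le> ?d level" "ereal (?d level) \<le> c"
    using \<open>0 \<le> t i\<close> \<open>ereal (t i) \<le> c\<close> by (simp_all add: deviation_toll_at_level[OF i])
  ultimately have "ereal (t i) < c \<Longrightarrow> S * (D - t i) \<le> 0" "0 < t i \<Longrightarrow> 0 \<le> S * (D - t i)"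
    using first_order_conditions[OF deriv_profit DERIV_deviation_toll[OF i, folded S_def]
        _ _ _ max_profit]
    by (simp_all add: deviation_toll_at_level[OF i])
  with \<open>0 < S\<close> show "ereal (t i) < c \<Longrightarrow> D \<le> t i" "0 < t i \<Longrightarrow> t i \<le> D"
    by (simp_all add: mult_le_0_iff zero_le_mult_iff)
qed

end

theorem mainTheorem4:
  fixes n :: nat and l :: "nat \<Rightarrow> real \<Rightarrow> real" and c :: ereal and t :: "nat \<Rightarrow> real"
  assumes "n \<ge> 2"
    and "\<forall>i<n. in_Lc (l i)"
    and "c \<ge> 0"
    and "t \<in> toll_eq n l c"
    and "\<forall>i<n. eq_flow n l t i > 0"
  shows "\<forall>i<n. ereal (t i) =
     min (ereal ((deriv (l i) (eq_flow n l t i)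
                  + 1 / (\<Sum>j\<in>{..<n} - {i}. 1 / deriv (l j) (eq_flow n l t j)))
                 * eq_flow n l t i)) c"
proof (intro allI impI)
  fix i assume i: "i < n"
  interpret interior_equilibrium n l t "eq_flow n l t"
    using assms(1,2,5) wardrop_eq_flow[of n l t] by unfold_locales auto
  have "0 < (deriv (l i) (eq_flow n l t i)
      + 1 / (\<Sum>j\<in>{..<n} - {i}. 1 / deriv (l j) (eq_flow n l t j))) * eq_flow n l t i"
    using in_Lc_deriv_pos sum_inverse_deriv_pos assms(2,5) i by (simp add: add_pos_pos)
  moreover have "0 \<le> t i" "ereal (t i) \<le> c"
    using assms(4) i unfolding toll_eq_def by auto
  ultimately show "ereal (t i) = min (ereal ((deriv (l i) (eq_flow n l t i)
      + 1 / (\<Sum>j\<in>{..<n} - {i}. 1 / deriv (l j) (eq_flow n l t j))) * eq_flow n l t i)) c"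
    using toll_eq_first_order[OF i assms(4) refl] by (rule ereal_eq_min_if_first_order)
qed

end
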